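(* Let $m_1,m_2\in\mathcal M$. The class of functions $$\mathscr F(m_1,m_2)=\Big\{(w,y)\mapsto \frac{r_{\gamma_2(w)}(y)}{r_{\gamma_1(w)}(y)}:\ \gamma_1\in\Gamma_{m_1},\ \gamma_2\in\Gamma_{m_2}\Big\}$$ on $\mathscr W\times\mathscr Y$ is a VC-subgraph class with VC dimension at most $2|m_1\vee m_2|+1$.
   Context: $I\subset\mathbb R$ is an interval with nonempty interior; $r_\gamma(y)=\exp(u(\gamma)T(y)-A(\gamma))$ for $\gamma\in I$, $y\in\mathscr Y$, where $T$ is a real measurable function on $\mathscr Y$, $u$ is continuous strictly monotone on $I$, and $A(\gamma)=\log\int e^{u(\gamma)T}d\nu<\infty$ for a measure $\nu$ on $\mathscr Y$. $\mathcal M$ is a set of partitions of $\mathscr W$ into finitely many measurable sets; $|m|$ is the number of sets of $m$; $m_1\vee m_2=\{K_1\cap K_2: K_1\in m_1,K_2\in m_2,K_1\cap K_2\neq\emptyset\}$. For $m\in\mathcal M$, $\Gamma_m$ is a collection of functions $\mathscr W\to I$ that are constant on each set of $m$. *)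

theory Defs
  imports "HOL-Analysis.Analysis"
begin

definition shatters :: "'a set set \<Rightarrow> 'a set \<Rightarrow> bool" where
  "shatters C S \<longleftrightarrow> (\<forall>T \<subseteq> S. \<exists>B \<in> C. B \<inter> S = T)"

definition vc_dim_le :: "'a set set \<Rightarrow> nat \<Rightarrow> bool" where
  "vc_dim_le C V \<longleftrightarrow> (\<forall>S. finite S \<and> shatters C S \<longrightarrow> card S \<le> V)"

definition subgraph :: "'a set \<Rightarrow> ('a \<Rightarrow> real) \<Rightarrow> ('a \<times> real) set" where
  "subgraph D f = {(x, t). x \<in> D \<and> t < f x}"

definition vc_subgraph_dim_le :: "'a set \<Rightarrow> ('a \<Rightarrow> real) set \<Rightarrow> nat \<Rightarrow> bool" where
  "vc_subgraph_dim_le D F V \<longleftrightarrow> vc_dim_le (subgraph D ` F) V"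

definition is_partition :: "'w measure \<Rightarrow> 'w set set \<Rightarrow> bool" where
  "is_partition M m \<longleftrightarrow> finite m \<and> (\<forall>K \<in> m. K \<noteq> {} \<and> K \<in> sets M)
     \<and> \<Union>m = space M \<and> disjoint m"

definition join :: "'w set set \<Rightarrow> 'w set set \<Rightarrow> 'w set set" where
  "join m1 m2 = {K1 \<inter> K2 | K1 K2. K1 \<in> m1 \<and> K2 \<in> m2 \<and> K1 \<inter> K2 \<noteq> {}}"

definition logA :: "'y measure \<Rightarrow> ('y \<Rightarrow> real) \<Rightarrow> (real \<Rightarrow> real) \<Rightarrow> real \<Rightarrow> real" where
  "logA \<nu> T u \<gamma> = ln (enn2real (\<integral>\<^sup>+ y. ennreal (exp (u \<gamma> * T y)) \<partial>\<nu>))"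

definition rdens :: "'y measure \<Rightarrow> ('y \<Rightarrow> real) \<Rightarrow> (real \<Rightarrow> real) \<Rightarrow> real \<Rightarrow> 'y \<Rightarrow> real" where
  "rdens \<nu> T u \<gamma> y = exp (u \<gamma> * T y - logA \<nu> T u \<gamma>)"

end

theory Submission
  imports Defs
begin

text \<open>On a cell \<open>K\<^sub>1 \<inter> K\<^sub>2\<close> of \<open>m\<^sub>1 \<or> m\<^sub>2\<close> both parameters are constant, so every
  function of the class is \<open>(w, y) \<mapsto> exp (a T(y) + c)\<close> there. For points with positive
  ordinate, lying under such a graph means \<open>ln t < a s + c\<close> with \<open>s = T(y)\<close>, so the subgraphs
  trace open half-planes below lines in the \<open>(s, ln t)\<close>-plane, which shatter no three points
  (Radon). Hence a shattered set has at most two points per cell. No property of \<open>I\<close>, \<open>u\<close>,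
  \<open>T\<close> or \<open>\<nu>\<close> is needed beyond the form of the density.\<close>

lemma shatters_subset:
  assumes "shatters C S" and "S' \<subseteq> S"
  shows "shatters C S'"
  unfolding shatters_def
proof (intro allI impI)
  fix T assume "T \<subseteq> S'"
  then obtain B where "B \<in> C" "B \<inter> S = T" using assms unfolding shatters_def by blast
  then have "B \<inter> S' = T" using \<open>T \<subseteq> S'\<close> \<open>S' \<subseteq> S\<close> by blast
  with \<open>B \<in> C\<close> show "\<exists>B\<in>C. B \<inter> S' = T" by blast
qed

lemma shatters_labeling:
  assumes "shatters C S" and "P \<subseteq> S"
  shows "\<exists>B\<in>C. \<forall>q\<in>P. q \<in> B \<longleftrightarrow> b q"
proof -
  obtain B where "B \<in> C" "B \<inter> S = {q \<in> P. b q}"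
    using assms unfolding shatters_def by (metis (no_types, lifting) mem_Collect_eq subset_iff)
  with assms(2) show ?thesis by blast
qed

lemma shatters_image:
  assumes sh: "shatters C S"
    and trace: "\<And>B. B \<in> C \<Longrightarrow> \<exists>B'\<in>C'. B \<inter> S = g -` B' \<inter> S"
  shows "inj_on g S" and "shatters C' (g ` S)"
proof -
  show "inj_on g S"
  proof (rule inj_onI, rule ccontr)
    fix p q assume "p \<in> S" "q \<in> S" "g p = g q" "p \<noteq> q"
    obtain B where "B \<in> C" "B \<inter> S = {p}"
      using sh \<open>p \<in> S\<close> unfolding shatters_def by blast
    moreover obtain B' where B': "B \<inter> S = g -` B' \<inter> S" using trace \<open>B \<in> C\<close> by blast
    ultimately have "g p \<in> B'" by (metis Int_iff insertI1 vimageE)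
    then have "q \<in> B \<inter> S" using B' \<open>q \<in> S\<close> \<open>g p = g q\<close> by simp
    with \<open>B \<inter> S = {p}\<close> \<open>p \<noteq> q\<close> show False by auto
  qed
  show "shatters C' (g ` S)"
    unfolding shatters_def
  proof (intro allI impI)
    fix T' assume "T' \<subseteq> g ` S"
    obtain B where "B \<in> C" "B \<inter> S = S \<inter> g -` T'"
      using sh unfolding shatters_def by blast
    moreover obtain B' where "B' \<in> C'" "B \<inter> S = g -` B' \<inter> S" using trace \<open>B \<in> C\<close> by blast
    ultimately have "B' \<inter> g ` S = T'" using \<open>T' \<subseteq> g ` S\<close> by blast
    with \<open>B' \<in> C'\<close> show "\<exists>B'\<in>C'. B' \<inter> g ` S = T'" by blast
  qed
qed

lemma shatters_subgraph_in_domain: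
  assumes "shatters (subgraph D ` F) S" and "p \<in> S"
  shows "fst p \<in> D"
proof -
  obtain f where "subgraph D f \<inter> S = S" using assms(1) unfolding shatters_def by blast
  with assms(2) show ?thesis unfolding subgraph_def by (cases p) auto
qed

text \<open>Radon's argument for the plane: a weighting of the points that annihilates
  the affine functions of the abscissa forbids the labeling by the sign of the weights.\<close>
lemma affine_labeling_unrealizable:
  fixes m s z :: "'i \<Rightarrow> real"
  assumes "finite P" and "(\<Sum>i\<in>P. m i) = 0" and "(\<Sum>i\<in>P. m i * s i) = 0"
    and "0 \<le> (\<Sum>i\<in>P. m i * z i)" and "\<exists>i\<in>P. 0 < m i"
  shows "\<not> (\<forall>i\<in>P. z i < a * s i + c \<longleftrightarrow> 0 < m i)"
proof
  assume label: "\<forall>i\<in>P. z i < a * s i + c \<longleftrightarrow> 0 < m i"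
  have "(\<Sum>i\<in>P. m i * (z i - a * s i - c)) = (\<Sum>i\<in>P. m i * z i) - a * (\<Sum>i\<in>P. m i * s i) - c * (\<Sum>i\<in>P. m i)"
    by (simp add: algebra_simps sum_subtractf sum_distrib_left sum.distrib)
  also have "\<dots> \<ge> 0" using assms(2-4) by simp
  finally have "0 \<le> (\<Sum>i\<in>P. m i * (z i - a * s i - c))" .
  moreover have "(\<Sum>i\<in>P. m i * (z i - a * s i - c)) < (\<Sum>i\<in>P. 0)"
  proof (rule sum_strict_mono_ex1[OF \<open>finite P\<close>])
    have signs: "m i * (z i - a * s i - c) < 0 \<or> (m i \<le> 0 \<and> m i * (z i - a * s i - c) \<le> 0)"
      if "i \<in> P" for i
      using label that mult_pos_neg[of "m i" "z i - a * s i - c"]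
        mult_nonpos_nonneg[of "m i" "z i - a * s i - c"] by force
    show "\<forall>i\<in>P. m i * (z i - a * s i - c) \<le> 0" using signs by fastforce
    show "\<exists>i\<in>P. m i * (z i - a * s i - c) < 0" using signs assms(5) by fastforce
  qed
  ultimately show False by simp
qed

lemma affine_labeling_exists_unrealizable:
  fixes m s z :: "'i \<Rightarrow> real"
  assumes "finite P" and "(\<Sum>i\<in>P. m i) = 0" and "(\<Sum>i\<in>P. m i * s i) = 0"
    and "\<exists>i\<in>P. m i \<noteq> 0"
  shows "\<exists>b. \<forall>a c. \<not> (\<forall>i\<in>P. z i < a * s i + c \<longleftrightarrow> b i)"
proof -
  have pos: "\<exists>i\<in>P. 0 < m i"
    using sum_nonneg_eq_0_iff[OF \<open>finite P\<close>, of "\<lambda>i. - m i"] assms(2,4)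
    by (fastforce simp: sum_negf)
  have neg: "\<exists>i\<in>P. m i < 0"
    using sum_nonneg_eq_0_iff[OF \<open>finite P\<close>, of m] assms(2,4) by fastforce
  show ?thesis
  proof (cases "0 \<le> (\<Sum>i\<in>P. m i * z i)")
    case True
    show ?thesis
      using affine_labeling_unrealizable[OF assms(1-3) True pos] by (intro exI allI)
  next
    case False
    have "0 \<le> (\<Sum>i\<in>P. - m i * z i)" using False by (simp add: sum_negf)
    moreover have "(\<Sum>i\<in>P. - m i) = 0" "(\<Sum>i\<in>P. - m i * s i) = 0"
      using assms(2,3) by (simp_all add: sum_negf)
    ultimately show ?thesis
      using affine_labeling_unrealizable[OF assms(1), of "\<lambda>i. - m i"] neg
      by (intro exI[of _ "\<lambda>i. 0 < - m i"] allI) (simp add: sum_negf)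
  qed
qed

lemma vc_dim_le_affine_subgraphs:
  "vc_dim_le {{q :: real \<times> real. snd q < a * fst q + c} | a c. True} 2"
  unfolding vc_dim_le_def
proof (intro allI impI, elim conjE, rule ccontr)
  let ?C = "{{q :: real \<times> real. snd q < a * fst q + c} | a c. True}"
  fix S assume sh: "shatters ?C S" and "\<not> card S \<le> 2"
  then obtain T where "T \<subseteq> S" "card T = 3"
    by (metis not_less_eq_eq numeral_2_eq_2 numeral_3_eq_3 obtain_subset_with_card_n)
  then obtain q1 q2 q3 where q: "{q1, q2, q3} \<subseteq> S" "q1 \<noteq> q2" "q1 \<noteq> q3" "q2 \<noteq> q3"
    by (metis card_3_iff)
  have realizable: "\<exists>a c. \<forall>q\<in>P. snd q < a * fst q + c \<longleftrightarrow> b q" if "P \<subseteq> S" for P b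
    using shatters_labeling[OF sh that, of b] by blast
  consider (vertical) "fst q1 = fst q2" | (general) "fst q1 \<noteq> fst q2" by blast
  then show False
  proof cases
    case vertical
    define m where "m q = (if q = q1 then 1 else -1 :: real)" for q
    have "(\<Sum>q\<in>{q1, q2}. m q) = 0" "(\<Sum>q\<in>{q1, q2}. m q * fst q) = 0"
      using q vertical by (simp_all add: m_def)
    moreover have "\<exists>q\<in>{q1, q2}. m q \<noteq> 0" by (simp add: m_def)
    ultimately obtain b where "\<forall>a c. \<not> (\<forall>q\<in>{q1, q2}. snd q < a * fst q + c \<longleftrightarrow> b q)"
      using affine_labeling_exists_unrealizable[of "{q1, q2}" m fst snd] by blast
    then show False using realizable[of "{q1, q2}" b] q by blast
  next
    case general
    define m where "m q = (if q = q1 then fst q2 - fst q3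
      else if q = q2 then fst q3 - fst q1 else fst q1 - fst q2)" for q
    have "(\<Sum>q\<in>{q1, q2, q3}. m q) = 0" "(\<Sum>q\<in>{q1, q2, q3}. m q * fst q) = 0"
      using q by (simp_all add: m_def algebra_simps)
    moreover have "\<exists>q\<in>{q1, q2, q3}. m q \<noteq> 0" using q general by (simp add: m_def)
    ultimately obtain b where "\<forall>a c. \<not> (\<forall>q\<in>{q1, q2, q3}. snd q < a * fst q + c \<longleftrightarrow> b q)"
      using affine_labeling_exists_unrealizable[of "{q1, q2, q3}" m fst snd] by blast
    then show False using realizable[of "{q1, q2, q3}" b] q by blast
  qed
qed

lemma card_shattered_exp_affine_le:
  fixes \<phi> :: "'a \<Rightarrow> real"
  assumes "finite S" and sh: "shatters (subgraph D ` F) S"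
    and exp_affine: "\<And>f. f \<in> F \<Longrightarrow> \<exists>a c. \<forall>p\<in>S. f (fst p) = exp (a * \<phi> (fst p) + c)"
  shows "card S \<le> 2"
proof -
  have dom: "fst p \<in> D" if "p \<in> S" for p
    using shatters_subgraph_in_domain[OF sh that] .
  have pos: "0 < snd p" if "p \<in> S" for p
  proof -
    obtain f where "f \<in> F" "subgraph D f \<inter> S = {}" using sh unfolding shatters_def by blast
    moreover obtain a c where "\<forall>p\<in>S. f (fst p) = exp (a * \<phi> (fst p) + c)"
      using exp_affine \<open>f \<in> F\<close> by blast
    ultimately have "exp (a * \<phi> (fst p) + c) \<le> snd p"
      using that dom[OF that] unfolding subgraph_def by (cases p) force
    then show ?thesis using exp_gt_zero less_le_trans by blast
  qed
  let ?g = "\<lambda>p. (\<phi> (fst p), ln (snd p))"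
  let ?C = "{{q :: real \<times> real. snd q < a * fst q + c} | a c. True}"
  have "\<exists>B'\<in>?C. B \<inter> S = ?g -` B' \<inter> S" if B: "B \<in> subgraph D ` F" for B
  proof -
    obtain f where "f \<in> F" and f: "B = subgraph D f" using B by blast
    obtain a c where exp_form: "\<forall>p\<in>S. f (fst p) = exp (a * \<phi> (fst p) + c)"
      using exp_affine \<open>f \<in> F\<close> by blast
    have "p \<in> B \<longleftrightarrow> ln (snd p) < a * \<phi> (fst p) + c" if "p \<in> S" for p
    proof -
      have "p \<in> B \<longleftrightarrow> snd p < exp (a * \<phi> (fst p) + c)"
        using f exp_form dom[OF that] that unfolding subgraph_def by (cases p) auto
      also have "\<dots> \<longleftrightarrow> ln (snd p) < a * \<phi> (fst p) + c"
        using pos[OF that] by (metis exp_less_cancel_iff exp_ln)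
      finally show ?thesis .
    qed
    then have "B \<inter> S = ?g -` {q. snd q < a * fst q + c} \<inter> S" by auto
    then show ?thesis by blast
  qed
  from shatters_image[OF sh this] have "inj_on ?g S" and "shatters ?C (?g ` S)" by blast+
  moreover have "finite (?g ` S)" using \<open>finite S\<close> by simp
  ultimately have "card (?g ` S) \<le> 2"
    using vc_dim_le_affine_subgraphs unfolding vc_dim_le_def by blast
  with \<open>inj_on ?g S\<close> show ?thesis by (simp add: card_image)
qed

lemma vc_subgraph_dim_le_piecewise_exp_affine:
  fixes \<phi> :: "'a \<Rightarrow> real" and \<K> :: "'a set set"
  assumes "finite \<K>" and "D \<subseteq> \<Union>\<K>"
    and exp_affine: "\<And>f K. f \<in> F \<Longrightarrow> K \<in> \<K> \<Longrightarrow> \<exists>a c. \<forall>x\<in>D \<inter> K. f x = exp (a * \<phi> x + c)"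
    and "2 * card \<K> \<le> V"
  shows "vc_subgraph_dim_le D F V"
  unfolding vc_subgraph_dim_le_def vc_dim_le_def
proof (intro allI impI, elim conjE)
  fix S assume "finite S" and sh: "shatters (subgraph D ` F) S"
  define cell where "cell K = {p \<in> S. fst p \<in> K}" for K
  have "S \<subseteq> (\<Union>K\<in>\<K>. cell K)"
    using shatters_subgraph_in_domain[OF sh] \<open>D \<subseteq> \<Union>\<K>\<close> unfolding cell_def by blast
  then have "card S \<le> card (\<Union>K\<in>\<K>. cell K)"
    using \<open>finite S\<close> \<open>finite \<K>\<close> by (intro card_mono) (auto simp: cell_def)
  also have "\<dots> \<le> (\<Sum>K\<in>\<K>. card (cell K))" using \<open>finite \<K>\<close> by (rule card_UN_le)
  also have "\<dots> \<le> (\<Sum>K\<in>\<K>. 2)"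
  proof (rule sum_mono)
    fix K assume "K \<in> \<K>"
    have sh_cell: "shatters (subgraph D ` F) (cell K)"
      by (rule shatters_subset[OF sh]) (auto simp: cell_def)
    show "card (cell K) \<le> 2"
    proof (rule card_shattered_exp_affine_le[OF _ sh_cell])
      show "finite (cell K)" using \<open>finite S\<close> unfolding cell_def by simp
      fix f assume "f \<in> F"
      then obtain a c where "\<forall>x\<in>D \<inter> K. f x = exp (a * \<phi> x + c)"
        using exp_affine \<open>K \<in> \<K>\<close> by blast
      then show "\<exists>a c. \<forall>p\<in>cell K. f (fst p) = exp (a * \<phi> (fst p) + c)"
        using shatters_subgraph_in_domain[OF sh] unfolding cell_def by blast
    qed
  qed
  also have "\<dots> \<le> V" using assms(4) by simp
  finally show "card S \<le> V" .
qed

lemma finite_join: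
  assumes "finite m1" and "finite m2"
  shows "finite (join m1 m2)"
proof -
  have "join m1 m2 \<subseteq> (\<lambda>(K1, K2). K1 \<inter> K2) ` (m1 \<times> m2)" unfolding join_def by auto
  then show ?thesis using assms finite_subset by blast
qed

lemma Union_join: "\<Union>(join m1 m2) = \<Union>m1 \<inter> \<Union>m2"
  unfolding join_def by blast

lemma rdens_ratio:
  "rdens \<nu> T u \<gamma>2 y / rdens \<nu> T u \<gamma>1 y
     = exp ((u \<gamma>2 - u \<gamma>1) * T y + (logA \<nu> T u \<gamma>1 - logA \<nu> T u \<gamma>2))"
  unfolding rdens_def by (simp add: exp_diff[symmetric] algebra_simps)

lemma rdens_ratio_exp_affine_on_constant_set:
  assumes "\<forall>w\<in>K. \<forall>w'\<in>K. \<gamma>1 w = \<gamma>1 w' \<and> \<gamma>2 w = \<gamma>2 w'"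
  shows "\<exists>a c. \<forall>w\<in>K. \<forall>y. rdens \<nu> T u (\<gamma>2 w) y / rdens \<nu> T u (\<gamma>1 w) y = exp (a * T y + c)"
proof (cases "K = {}")
  case False
  then obtain w0 where "w0 \<in> K" by blast
  show ?thesis
  proof (intro exI ballI allI)
    fix w y assume "w \<in> K"
    with assms \<open>w0 \<in> K\<close> have "\<gamma>1 w = \<gamma>1 w0" "\<gamma>2 w = \<gamma>2 w0" by blast+
    then show "rdens \<nu> T u (\<gamma>2 w) y / rdens \<nu> T u (\<gamma>1 w) y
        = exp ((u (\<gamma>2 w0) - u (\<gamma>1 w0)) * T y + (logA \<nu> T u (\<gamma>1 w0) - logA \<nu> T u (\<gamma>2 w0)))"
      by (simp add: rdens_ratio)
  qed
qed simp

theorem mainTheorem3: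
  fixes I :: "real set" and u :: "real \<Rightarrow> real" and T :: "'y \<Rightarrow> real"
    and \<nu> :: "'y measure" and MW :: "'w measure"
    and \<M> :: "'w set set set" and \<Gamma> :: "'w set set \<Rightarrow> ('w \<Rightarrow> real) set"
    and m1 m2 :: "'w set set"
  assumes "is_interval I" and "interior I \<noteq> {}"
    and "T \<in> borel_measurable \<nu>"
    and "continuous_on I u" and "strict_mono_on I u \<or> strict_antimono_on I u"
    and "\<forall>\<gamma>\<in>I. (\<integral>\<^sup>+ y. ennreal (exp (u \<gamma> * T y)) \<partial>\<nu>) < \<infinity>"
    and "\<forall>m\<in>\<M>. is_partition MW m"
    and "\<forall>m\<in>\<M>. \<forall>\<gamma>\<in>\<Gamma> m. (\<forall>w\<in>space MW. \<gamma> w \<in> I)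
            \<and> (\<forall>K\<in>m. \<forall>w\<in>K. \<forall>w'\<in>K. \<gamma> w = \<gamma> w')"
    and "m1 \<in> \<M>" and "m2 \<in> \<M>"
  shows "vc_subgraph_dim_le (space MW \<times> space \<nu>)
           {(\<lambda>(w, y). rdens \<nu> T u (\<gamma>2 w) y / rdens \<nu> T u (\<gamma>1 w) y) | \<gamma>1 \<gamma>2.
              \<gamma>1 \<in> \<Gamma> m1 \<and> \<gamma>2 \<in> \<Gamma> m2}
           (2 * card (join m1 m2) + 1)"
proof -
  let ?J = "join m1 m2"
  let ?F = "{(\<lambda>(w, y). rdens \<nu> T u (\<gamma>2 w) y / rdens \<nu> T u (\<gamma>1 w) y) | \<gamma>1 \<gamma>2.
              \<gamma>1 \<in> \<Gamma> m1 \<and> \<gamma>2 \<in> \<Gamma> m2}"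
  have part: "is_partition MW m1" "is_partition MW m2" using assms(7,9,10) by auto
  have "finite ?J" using part by (intro finite_join) (simp_all add: is_partition_def)
  have const: "\<gamma> w = \<gamma> w'" if "m \<in> {m1, m2}" "\<gamma> \<in> \<Gamma> m" "K \<in> m" "w \<in> K" "w' \<in> K"
    for m \<gamma> K w w'
    using assms(8-10) that by blast
  show ?thesis
  proof (rule vc_subgraph_dim_le_piecewise_exp_affine[where \<phi> = "\<lambda>(w, y). T y"
        and \<K> = "(\<lambda>K. K \<times> space \<nu>) ` ?J"])
    show "finite ((\<lambda>K. K \<times> space \<nu>) ` ?J)" using \<open>finite ?J\<close> by simp
    have "\<Union>?J = space MW" using part by (simp add: Union_join is_partition_def)
    then show "space MW \<times> space \<nu> \<subseteq> \<Union>((\<lambda>K. K \<times> space \<nu>) ` ?J)" by auto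
    show "2 * card ((\<lambda>K. K \<times> space \<nu>) ` ?J) \<le> 2 * card ?J + 1"
      using card_image_le[OF \<open>finite ?J\<close>, of "\<lambda>K. K \<times> space \<nu>"] by linarith
  next
    fix f L assume "f \<in> ?F" "L \<in> (\<lambda>K. K \<times> space \<nu>) ` ?J"
    then obtain \<gamma>1 \<gamma>2 K1 K2 where
      f: "f = (\<lambda>(w, y). rdens \<nu> T u (\<gamma>2 w) y / rdens \<nu> T u (\<gamma>1 w) y)"
      and "\<gamma>1 \<in> \<Gamma> m1" "\<gamma>2 \<in> \<Gamma> m2" "K1 \<in> m1" "K2 \<in> m2"
      and L: "L = (K1 \<inter> K2) \<times> space \<nu>"
      unfolding join_def by blast
    then have "\<forall>w\<in>K1 \<inter> K2. \<forall>w'\<in>K1 \<inter> K2. \<gamma>1 w = \<gamma>1 w' \<and> \<gamma>2 w = \<gamma>2 w'"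
      using const by (meson IntD1 IntD2 insertCI)
    from rdens_ratio_exp_affine_on_constant_set[OF this] obtain a c where
      "\<forall>w\<in>K1 \<inter> K2. \<forall>y. rdens \<nu> T u (\<gamma>2 w) y / rdens \<nu> T u (\<gamma>1 w) y = exp (a * T y + c)"
      by blast
    then show "\<exists>a c. \<forall>x\<in>(space MW \<times> space \<nu>) \<inter> L. f x = exp (a * (case x of (w, y) \<Rightarrow> T y) + c)"
      unfolding f L by fastforce
  qed
qed

end
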